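(* For all integers $i\geq 1$, \[ v_3(a_i-1)=\begin{cases} 0, & i\equiv 0,4,5,7 \pmod 8;\\ v_3(i-1)+1, & i\equiv 1\pmod 8;\\ v_3(i+2)+1, & i\equiv 6 \pmod 8;\\ v_3(i-2)+2, & i\equiv 2\pmod{24};\\ 2, & i\equiv 10\pmod{24};\\ v_3\big((i+6)(i+30)\big)+2, & i\equiv 18\pmod{24};\\ v_3(i-3)+2, & i\equiv 3\pmod{24};\\ v_3(i+13)+2, & i\equiv 11\pmod{24};\\ v_3(i+5)+2, & i\equiv 19\pmod{24}. \end{cases} \]
   Context: The Narayana sequence $(a_n)_{n\geq 0}$ is defined by $a_0=0$, $a_1=a_2=1$ and $a_n=a_{n-1}+a_{n-3}$ for all $n\geq 3$. For an integer $x$, $v_3(x)$ denotes the $3$-adic valuation of $x$ (the exponent of the largest power of $3$ dividing $x$), with the convention $v_3(0)=+\infty$. *)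

theory Defs
  imports Main "HOL-Library.Extended_Nat" "HOL-Computational_Algebra.Primes"
begin

fun narayana :: "nat \<Rightarrow> int" where
  "narayana 0 = 0"
| "narayana (Suc 0) = 1"
| "narayana (Suc (Suc 0)) = 1"
| "narayana (Suc (Suc (Suc n))) = narayana (Suc (Suc n)) + narayana n"

definition v3 :: "int \<Rightarrow> enat" where
  "v3 x = (if x = 0 then \<infinity> else enat (multiplicity (3::int) x))"

end

theory Submission
  imports Defs
begin

text \<open>
  Work in \<open>\<int>[\<theta>]\<close> with \<open>\<theta>^3 = \<theta>^2 + 1\<close>, where \<open>a n = \<ell> (\<theta>^n)\<close> for the linear form
  \<open>\<ell> (c0 + c1 \<theta> + c2 \<theta>^2) = c1 + c2\<close>. One has \<open>\<theta>^8 \<in> 1 + 3 \<int>[\<theta>]\<close>,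
  \<open>\<theta>^24 \<in> 1 + 9 \<int>[\<theta>]\<close> and \<open>\<theta>^72 \<in> 1 + 27 \<int>[\<theta>]\<close>, and lifting the exponent shows
  that for \<open>P = 1 + 3^e X\<close> with \<open>e \<ge> 1\<close> and \<open>m = 3^t q\<close> one has
  \<open>P^m = 1 + 3^(e + t) (q X + 3^e W)\<close>. If \<open>i = N m + r\<close> with \<open>\<theta>^N = P\<close> and \<open>a r = 1\<close>
  (\<open>r\<close> may be negative, \<open>\<theta>\<close> being a unit), then \<open>a i - 1 = \<ell> ((P^m - 1) \<theta>^r)\<close> has
  valuation \<open>e + v3 (\<ell> (X \<theta>^r)) + v3 m\<close> as soon as \<open>v3 (\<ell> (X \<theta>^r)) < e\<close>. In the
  remaining residue classes the same expansion gives a congruence \<open>a i \<equiv> a r\<close> modulo a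
  power of 3 high enough to force \<open>v3 (a i - 1) = v3 (a r - 1)\<close>.
\<close>

lemma v3_mult: "v3 (x * y) = v3 x + v3 y"
  by (simp add: v3_def prime_elem_multiplicity_mult_distrib)

lemma v3_three_power: "v3 (3 ^ n) = enat n"
  by (simp add: v3_def)

lemma v3_eq_0_iff: "v3 x = 0 \<longleftrightarrow> \<not> 3 dvd x"
  by (auto simp: v3_def zero_enat_def not_dvd_imp_multiplicity_0 multiplicity_eq_zero_iff)

lemma v3_eq_enat_iff: "v3 x = enat n \<longleftrightarrow> 3 ^ n dvd x \<and> \<not> 3 ^ Suc n dvd x"
proof
  assume "3 ^ n dvd x \<and> \<not> 3 ^ Suc n dvd x"
  then show "v3 x = enat n"
    by (auto simp: v3_def multiplicity_eqI)
next
  assume "v3 x = enat n"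
  then have "x \<noteq> 0" "multiplicity 3 x = n" by (auto simp: v3_def split: if_splits)
  moreover have "\<not> is_unit (3::int)" by simp
  ultimately show "3 ^ n dvd x \<and> \<not> 3 ^ Suc n dvd x"
    using power_dvd_iff_le_multiplicity[of x 3 n] power_dvd_iff_le_multiplicity[of x 3 "Suc n"]
    by (simp del: power_Suc)
qed

lemma v3_eq_if_cong:
  assumes "3 ^ Suc n dvd x - y" "v3 y = enat n"
  shows "v3 x = enat n"
proof -
  have y: "3 ^ n dvd y" "\<not> 3 ^ Suc n dvd y" using assms(2) v3_eq_enat_iff by auto
  have "3 ^ n dvd x - y" using dvd_trans[OF le_imp_power_dvd[of n "Suc n"] assms(1)] by simp
  then have "3 ^ n dvd (x - y) + y" using y(1) by (rule dvd_add)
  then have "3 ^ n dvd x" by simp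
  moreover have "\<not> 3 ^ Suc n dvd x"
  proof
    assume "3 ^ Suc n dvd x"
    then have "3 ^ Suc n dvd x - (x - y)" using assms(1) by (rule dvd_diff)
    with y(2) show False by simp
  qed
  ultimately show ?thesis by (simp add: v3_eq_enat_iff)
qed

lemma v3_power_mult_not_dvd:
  assumes "\<not> 3 dvd c"
  shows "v3 (3 ^ k * (c * x)) = enat k + v3 x"
  using assms by (simp add: v3_mult v3_three_power v3_eq_0_iff[THEN iffD2])

lemma power_one_plus_mult:
  fixes c y :: "'a::comm_ring_1"
  shows "\<exists>z. (1 + c * y) ^ n = 1 + c * (of_nat n * y + c * z)"
proof (induction n)
  case 0
  show ?case by (intro exI[of _ 0]) simp
next
  case (Suc n)
  then obtain z where z: "(1 + c * y) ^ n = 1 + c * (of_nat n * y + c * z)" by blast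
  have "(1 + c * y) ^ Suc n = 1 + c * (of_nat (Suc n) * y + c * (z + (of_nat n * y + c * z) * y))"
    unfolding power_Suc2 z by (simp add: algebra_simps)
  then show ?case by blast
qed

lemma cube_one_plus_three_power_mult:
  fixes y :: "'a::comm_ring_1"
  shows "(1 + 3 ^ Suc k * y) ^ 3 = 1 + 3 ^ Suc (Suc k) * (y + 3 ^ Suc k * y\<^sup>2 + 3 ^ Suc (2 * k) * y ^ 3)"
  by (simp add: power2_eq_square power3_eq_cube power_add mult_2 mult_2_right algebra_simps)

lemma power_three_power_lifting:
  fixes x :: "'a::comm_ring_1"
  assumes "e > 0"
  shows "\<exists>w. (1 + 3 ^ e * x) ^ 3 ^ t = 1 + 3 ^ (e + t) * (x + 3 ^ e * w)"
proof (induction t)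
  case 0
  show ?case by (intro exI[of _ 0]) simp
next
  case (Suc t)
  then obtain w where w: "(1 + 3 ^ e * x) ^ 3 ^ t = 1 + 3 ^ (e + t) * (x + 3 ^ e * w)" by blast
  obtain e' where e: "e = Suc e'" using assms gr0_conv_Suc by blast
  define y where "y = x + 3 ^ e * w"
  have "(1 + 3 ^ e * x) ^ 3 ^ Suc t = ((1 + 3 ^ e * x) ^ 3 ^ t) ^ 3"
    by (simp flip: power_mult add: mult.commute)
  also have "\<dots> = (1 + 3 ^ Suc (e' + t) * y) ^ 3"
    unfolding w y_def by (simp add: e)
  also have "\<dots> = 1 + 3 ^ (e + Suc t) * (y + 3 ^ Suc (e' + t) * y\<^sup>2 + 3 ^ Suc (2 * (e' + t)) * y ^ 3)"
    by (simp only: cube_one_plus_three_power_mult e add_Suc add_Suc_right)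
  also have "y + 3 ^ Suc (e' + t) * y\<^sup>2 + 3 ^ Suc (2 * (e' + t)) * y ^ 3
      = x + 3 ^ e * (w + 3 ^ t * y\<^sup>2 + 3 ^ (e' + 2 * t) * y ^ 3)"
  proof -
    have "(3::'a) ^ Suc (e' + t) = 3 ^ e * 3 ^ t" "(3::'a) ^ Suc (2 * (e' + t)) = 3 ^ e * 3 ^ (e' + 2 * t)"
      by (simp_all add: e power_add mult_2)
    then show ?thesis by (simp add: algebra_simps y_def)
  qed
  finally show ?case by blast
qed

lemma power_lifting:
  fixes x :: "'a::comm_ring_1"
  assumes "e > 0"
  shows "\<exists>w. (1 + 3 ^ e * x) ^ (3 ^ t * q) = 1 + 3 ^ (e + t) * (of_nat q * x + 3 ^ e * w)"
proof -
  obtain w where w: "(1 + 3 ^ e * x) ^ 3 ^ t = 1 + 3 ^ (e + t) * (x + 3 ^ e * w)"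
    using power_three_power_lifting[OF assms] by blast
  obtain z where z: "(1 + 3 ^ (e + t) * (x + 3 ^ e * w)) ^ q
      = 1 + 3 ^ (e + t) * (of_nat q * (x + 3 ^ e * w) + 3 ^ (e + t) * z)"
    using power_one_plus_mult by blast
  have "(1 + 3 ^ e * x) ^ (3 ^ t * q) = 1 + 3 ^ (e + t) * (of_nat q * x + 3 ^ e * (of_nat q * w + 3 ^ t * z))"
    unfolding power_mult w z by (simp add: power_add algebra_simps)
  then show ?thesis by blast
qed

text \<open>
  \<open>Zt c0 c1 c2\<close> represents \<open>c0 + c1 \<theta> + c2 \<theta>^2\<close>; products are reduced with
  \<open>\<theta>^3 = \<theta>^2 + 1\<close> and \<open>\<theta>^4 = \<theta>^2 + \<theta> + 1\<close>.
\<close>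

datatype ztheta = Zt (coeff0: int) (coeff1: int) (coeff2: int)

instantiation ztheta :: comm_ring_1
begin
definition "0 = Zt 0 0 0"
definition "1 = Zt 1 0 0"
definition "a + b = Zt (coeff0 a + coeff0 b) (coeff1 a + coeff1 b) (coeff2 a + coeff2 b)"
definition "a - b = Zt (coeff0 a - coeff0 b) (coeff1 a - coeff1 b) (coeff2 a - coeff2 b)"
definition "- a = Zt (- coeff0 a) (- coeff1 a) (- coeff2 a)"
definition "a * b = Zt
   (coeff0 a * coeff0 b + (coeff1 a * coeff2 b + coeff2 a * coeff1 b) + coeff2 a * coeff2 b)
   (coeff0 a * coeff1 b + coeff1 a * coeff0 b + coeff2 a * coeff2 b)
   (coeff0 a * coeff2 b + coeff1 a * coeff1 b + coeff2 a * coeff0 b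
      + (coeff1 a * coeff2 b + coeff2 a * coeff1 b) + coeff2 a * coeff2 b)"
instance
  by standard
    (simp_all add: zero_ztheta_def one_ztheta_def plus_ztheta_def minus_ztheta_def
      uminus_ztheta_def times_ztheta_def ztheta.expand algebra_simps)
end

lemma ztheta_arith [simp]:
  "Zt a b c + Zt a' b' c' = Zt (a + a') (b + b') (c + c')"
  "Zt a b c - Zt a' b' c' = Zt (a - a') (b - b') (c - c')"
  "Zt a b c * Zt a' b' c' = Zt (a * a' + (b * c' + c * b') + c * c') (a * b' + b * a' + c * c')
     (a * c' + b * b' + c * a' + (b * c' + c * b') + c * c')"
  by (simp_all add: plus_ztheta_def minus_ztheta_def times_ztheta_def)

lemma one_ztheta: "1 = Zt 1 0 0"
  by (simp add: one_ztheta_def)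

lemma of_int_ztheta: "of_int n = Zt n 0 0"
proof -
  have "of_nat k = Zt (int k) 0 0" for k
    by (induction k) (simp_all add: zero_ztheta_def one_ztheta_def)
  then show ?thesis
    by (cases n rule: int_cases) (simp_all add: uminus_ztheta_def one_ztheta_def)
qed

lemma numeral_ztheta: "numeral k = Zt (numeral k) 0 0"
  using of_int_ztheta[of "numeral k"] by simp

definition theta :: ztheta where "theta = Zt 0 1 0"

definition theta_inv :: ztheta where "theta_inv = Zt 0 (- 1) 1"

lemma theta_mult_theta_inv: "theta * theta_inv = 1"
  by (simp add: theta_def theta_inv_def one_ztheta)

lemma theta_cube: "theta ^ 3 = theta\<^sup>2 + 1"
  by (simp add: theta_def power3_eq_cube power2_eq_square one_ztheta)

definition ell :: "ztheta \<Rightarrow> int" where "ell z = coeff1 z + coeff2 z"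

lemma ell_add: "ell (a + b) = ell a + ell b"
  by (simp add: ell_def plus_ztheta_def)

lemma ell_diff: "ell (a - b) = ell a - ell b"
  by (simp add: ell_def minus_ztheta_def)

lemma ell_of_int_mult: "ell (of_int c * z) = c * ell z"
  by (cases z) (simp add: ell_def of_int_ztheta algebra_simps)

lemma narayana_eq_ell: "narayana n = ell (theta ^ n)"
proof (induction n rule: narayana.induct)
  case (4 n)
  have "theta ^ Suc (Suc (Suc n)) = theta ^ n * theta ^ 3"
    by (simp add: power3_eq_cube mult_ac)
  also have "\<dots> = theta ^ n * theta\<^sup>2 + theta ^ n"
    by (simp add: theta_cube distrib_left)
  also have "theta ^ n * theta\<^sup>2 = theta ^ Suc (Suc n)"
    by (simp add: power2_eq_square mult_ac)
  finally show ?case using 4 by (simp add: ell_add)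
qed (simp_all add: ell_def theta_def one_ztheta)

lemma ell_power_lifting:
  assumes "P = 1 + 3 ^ e * X" "e > 0"
  shows "\<exists>W. ell (P ^ (3 ^ t * q) * w) - ell w
           = 3 ^ (e + t) * (int q * ell (X * w) + 3 ^ e * ell (W * w))"
proof -
  obtain W where W: "P ^ (3 ^ t * q) = 1 + 3 ^ (e + t) * (of_nat q * X + 3 ^ e * W)"
    using power_lifting[OF assms(2)] assms(1) by blast
  have "ell (P ^ (3 ^ t * q) * w) - ell w
      = ell (of_int (3 ^ (e + t)) * (of_int (int q) * (X * w) + of_int (3 ^ e) * (W * w)))"
    unfolding W ell_diff[symmetric] by (simp add: algebra_simps)
  also have "\<dots> = 3 ^ (e + t) * (int q * ell (X * w) + 3 ^ e * ell (W * w))"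
    by (simp only: ell_add ell_of_int_mult)
  finally show ?thesis by blast
qed

lemma three_power_dvd_ell_power_diff:
  assumes "P = 1 + 3 ^ e * X" "e > 0" "d \<le> e" "3 ^ d dvd ell (X * w)"
  shows "3 ^ (e + d) dvd ell (P ^ m * w) - ell w"
proof -
  obtain W where W: "ell (P ^ (3 ^ 0 * m) * w) - ell w
      = 3 ^ (e + 0) * (int m * ell (X * w) + 3 ^ e * ell (W * w))"
    using ell_power_lifting[OF assms(1,2)] by blast
  have "3 ^ d dvd int m * ell (X * w) + 3 ^ e * ell (W * w)"
    using assms(3,4) by (simp add: dvd_add le_imp_power_dvd)
  then show ?thesis
    using W by (simp add: power_add mult_dvd_mono)
qed

lemma v3_ell_power_diff:
  assumes "P = 1 + 3 ^ e * X" "d < e" "v3 (ell (X * w)) = enat d"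
  shows "v3 (ell (P ^ m * w) - ell w) = enat (e + d) + v3 (int m)"
proof (cases "m = 0")
  case True
  then show ?thesis by (simp add: v3_def)
next
  case False
  define t where "t = multiplicity 3 m"
  obtain q where m: "m = 3 ^ t * q" and "\<not> 3 dvd q"
    using multiplicity_decompose'[of m 3] False unfolding t_def by auto
  then have q: "\<not> 3 dvd int q" by presburger
  obtain u where u: "ell (X * w) = 3 ^ d * u"
    using assms(3) v3_eq_enat_iff by (auto elim: dvdE)
  have "\<not> 3 dvd u"
    using assms(3) by (simp add: u v3_mult v3_three_power flip: v3_eq_0_iff)
  obtain W where W: "ell (P ^ m * w) - ell w
      = 3 ^ (e + t) * (int q * ell (X * w) + 3 ^ e * ell (W * w))"
    using ell_power_lifting[OF assms(1)] assms(2) m by fastforce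
  obtain s where e: "e = Suc (d + s)" using less_imp_Suc_add[OF assms(2)] by blast
  have "ell (P ^ m * w) - ell w = 3 ^ (e + t + d) * (int q * u + 3 * (3 ^ s * ell (W * w)))"
    unfolding W u by (simp add: e power_add algebra_simps)
  moreover have "\<not> 3 dvd int q * u + 3 * (3 ^ s * ell (W * w))"
    using q \<open>\<not> 3 dvd u\<close> by (simp add: dvd_add_left_iff prime_dvd_mult_iff)
  moreover have "v3 (int m) = enat t"
    using q by (simp add: m v3_mult v3_three_power flip: v3_eq_0_iff)
  ultimately show ?thesis by (simp add: v3_mult v3_three_power flip: v3_eq_0_iff)
qed

lemma theta_power_8: "theta ^ 8 = 1 + 3 ^ 1 * Zt 1 1 2"
  by (simp add: theta_def numeral_eq_Suc one_ztheta numeral_ztheta)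

lemma theta_power_24: "theta ^ 24 = 1 + 3 ^ 2 * Zt 208 142 305"
proof -
  have "theta ^ 24 = (theta ^ 8) ^ 3" by (simp flip: power_mult)
  then show ?thesis by (simp add: theta_power_8 power2_eq_square power3_eq_cube one_ztheta numeral_ztheta)
qed

lemma theta_power_72: "theta ^ 72 = 1 + 3 ^ 3 * Zt 6449191669 4400462788 9451749779"
proof -
  have "theta ^ 72 = (theta ^ 24) ^ 3" by (simp flip: power_mult)
  then show ?thesis by (simp add: theta_power_24 power2_eq_square power3_eq_cube one_ztheta numeral_ztheta)
qed

lemma theta_power_add_mult: "theta ^ (N * m + r) = (theta ^ N) ^ m * theta ^ r"
  by (simp add: power_add power_mult)

lemma theta_power_eq_mult_theta_inv:
  assumes "i + k = N * m"
  shows "theta ^ i = (theta ^ N) ^ m * theta_inv ^ k"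
proof -
  have "(theta ^ N) ^ m * theta_inv ^ k = theta ^ i * (theta * theta_inv) ^ k"
    by (simp add: assms[symmetric] power_mult[symmetric] power_add power_mult_distrib mult_ac)
  then show ?thesis by (simp add: theta_mult_theta_inv)
qed

lemma three_power_dvd_narayana_diff:
  assumes "theta ^ N = 1 + 3 ^ e * X" "e > 0" "d \<le> e" "3 ^ d dvd ell (X * theta ^ r)"
  shows "3 ^ (e + d) dvd narayana (N * m + r) - narayana r"
  using three_power_dvd_ell_power_diff[OF assms, of m]
  by (simp add: narayana_eq_ell theta_power_add_mult)

lemma v3_narayana_minus_one:
  assumes "theta ^ i = (theta ^ N) ^ m * w" "theta ^ N = 1 + 3 ^ e * X"
    "d < e" "v3 (ell (X * w)) = enat d" "ell w = 1"
  shows "v3 (narayana i - 1) = enat (e + d) + v3 (int m)"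
  using v3_ell_power_diff[OF assms(2-4), of m] assms(1,5) by (simp add: narayana_eq_ell)

lemma mod_complement_multE:
  fixes i :: nat
  assumes "i mod N + k = N"
  obtains m where "i + k = N * m"
proof -
  have "(i + k) mod N = 0" using mod_add_left_eq[of i N k] assms by simp
  then show ?thesis using that by (auto simp: mod_eq_0_iff_dvd elim: dvdE)
qed

lemma v3_narayana_minus_one_0457_mod_8:
  assumes "i mod 8 \<in> {0, 4, 5, 7}"
  shows "v3 (narayana i - 1) = 0"
proof -
  define r where "r = i mod 8"
  have r: "r \<in> {0, 4, 5, 7}" using assms by (simp add: r_def)
  have "3 ^ (1 + 0) dvd narayana (8 * (i div 8) + r) - narayana r"
    by (rule three_power_dvd_narayana_diff[OF theta_power_8]) simp_all
  then have "3 ^ Suc 0 dvd (narayana i - 1) - (narayana r - 1)"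
    by (simp add: r_def)
  moreover have "v3 (narayana r - 1) = enat 0"
    using r by (auto simp: v3_eq_enat_iff numeral_eq_Suc)
  ultimately have "v3 (narayana i - 1) = enat 0" by (rule v3_eq_if_cong)
  then show ?thesis by (simp add: zero_enat_def)
qed

lemma v3_narayana_minus_one_1_mod_8:
  assumes "i mod 8 = 1"
  shows "v3 (narayana i - 1) = v3 (int i - 1) + 1"
proof -
  define m where "m = i div 8"
  have i: "i = 8 * m + 1" using mult_div_mod_eq[of 8 i] assms unfolding m_def by simp
  then have "theta ^ i = (theta ^ 8) ^ m * theta ^ 1" by (simp only: theta_power_add_mult)
  then have "v3 (narayana i - 1) = enat (1 + 0) + v3 (int m)"
    by (rule v3_narayana_minus_one[OF _ theta_power_8, where d = 0])
      (simp_all add: v3_eq_enat_iff ell_def theta_def)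
  moreover have "int i - 1 = 8 * int m" using i by simp
  ultimately show ?thesis
    using v3_power_mult_not_dvd[of 8 0 "int m"] by (simp add: add.commute one_enat_def)
qed

lemma v3_narayana_minus_one_6_mod_8:
  assumes "i mod 8 = 6"
  shows "v3 (narayana i - 1) = v3 (int i + 2) + 1"
proof -
  obtain m where i: "i + 2 = 8 * m"
    by (rule mod_complement_multE[of i 8 2]) (simp_all add: assms)
  then have "theta ^ i = (theta ^ 8) ^ m * theta_inv ^ 2" by (rule theta_power_eq_mult_theta_inv)
  then have "v3 (narayana i - 1) = enat (1 + 0) + v3 (int m)"
    by (rule v3_narayana_minus_one[OF _ theta_power_8, where d = 0])
      (simp_all add: v3_eq_enat_iff ell_def theta_inv_def power2_eq_square)
  moreover have "int i + 2 = 8 * int m" using arg_cong[OF i, of int] by simp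
  ultimately show ?thesis
    using v3_power_mult_not_dvd[of 8 0 "int m"] by (simp add: add.commute one_enat_def)
qed

lemma v3_narayana_minus_one_2_mod_24:
  assumes "i mod 24 = 2"
  shows "v3 (narayana i - 1) = v3 (int i - 2) + 2"
proof -
  define m where "m = i div 24"
  have i: "i = 24 * m + 2" using mult_div_mod_eq[of 24 i] assms unfolding m_def by simp
  then have "theta ^ i = (theta ^ 24) ^ m * theta ^ 2" by (simp only: theta_power_add_mult)
  then have "v3 (narayana i - 1) = enat (2 + 1) + v3 (int m)"
    by (rule v3_narayana_minus_one[OF _ theta_power_24, where d = 1])
      (simp_all add: v3_eq_enat_iff ell_def theta_def power2_eq_square)
  moreover have "int i - 2 = 24 * int m" using i by simp
  ultimately show ?thesis
    using v3_power_mult_not_dvd[of 8 1 "int m"] by (simp add: add_ac numeral_eq_enat)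
qed

lemma v3_narayana_minus_one_3_mod_24:
  assumes "i mod 24 = 3"
  shows "v3 (narayana i - 1) = v3 (int i - 3) + 2"
proof -
  define m where "m = i div 24"
  have i: "i = 24 * m + 3" using mult_div_mod_eq[of 24 i] assms unfolding m_def by simp
  then have "theta ^ i = (theta ^ 24) ^ m * theta ^ 3" by (simp only: theta_power_add_mult)
  then have "v3 (narayana i - 1) = enat (2 + 1) + v3 (int m)"
    by (rule v3_narayana_minus_one[OF _ theta_power_24, where d = 1])
      (simp_all add: v3_eq_enat_iff ell_def theta_def power3_eq_cube)
  moreover have "int i - 3 = 24 * int m" using i by simp
  ultimately show ?thesis
    using v3_power_mult_not_dvd[of 8 1 "int m"] by (simp add: add_ac numeral_eq_enat)
qed

lemma v3_narayana_minus_one_10_mod_24: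
  assumes "i mod 24 = 10"
  shows "v3 (narayana i - 1) = 2"
proof -
  define m where "m = i div 24"
  have i: "i = 24 * m + 10" using mult_div_mod_eq[of 24 i] assms unfolding m_def by simp
  have "3 ^ (2 + 1) dvd narayana (24 * m + 10) - narayana 10"
    by (rule three_power_dvd_narayana_diff[OF theta_power_24])
      (simp_all add: theta_def numeral_eq_Suc ell_def)
  then have "3 ^ Suc 2 dvd (narayana i - 1) - (narayana 10 - 1)"
    by (simp add: i)
  moreover have "v3 (narayana 10 - 1) = enat 2"
    by (simp add: v3_eq_enat_iff numeral_eq_Suc)
  ultimately have "v3 (narayana i - 1) = enat 2" by (rule v3_eq_if_cong)
  then show ?thesis by (simp add: numeral_eq_enat)
qed

lemma v3_narayana_minus_one_11_mod_24:
  assumes "i mod 24 = 11"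
  shows "v3 (narayana i - 1) = v3 (int i + 13) + 2"
proof -
  obtain m where i: "i + 13 = 24 * m"
    by (rule mod_complement_multE[of i 24 13]) (simp_all add: assms)
  then have "theta ^ i = (theta ^ 24) ^ m * theta_inv ^ 13" by (rule theta_power_eq_mult_theta_inv)
  then have "v3 (narayana i - 1) = enat (2 + 1) + v3 (int m)"
    by (rule v3_narayana_minus_one[OF _ theta_power_24, where d = 1])
      (simp_all add: v3_eq_enat_iff ell_def theta_inv_def numeral_eq_Suc)
  moreover have "int i + 13 = 24 * int m" using arg_cong[OF i, of int] by simp
  ultimately show ?thesis
    using v3_power_mult_not_dvd[of 8 1 "int m"] by (simp add: add_ac numeral_eq_enat)
qed

lemma v3_narayana_minus_one_19_mod_24:
  assumes "i mod 24 = 19"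
  shows "v3 (narayana i - 1) = v3 (int i + 5) + 2"
proof -
  obtain m where i: "i + 5 = 24 * m"
    by (rule mod_complement_multE[of i 24 5]) (simp_all add: assms)
  then have "theta ^ i = (theta ^ 24) ^ m * theta_inv ^ 5" by (rule theta_power_eq_mult_theta_inv)
  then have "v3 (narayana i - 1) = enat (2 + 1) + v3 (int m)"
    by (rule v3_narayana_minus_one[OF _ theta_power_24, where d = 1])
      (simp_all add: v3_eq_enat_iff ell_def theta_inv_def numeral_eq_Suc)
  moreover have "int i + 5 = 24 * int m" using arg_cong[OF i, of int] by simp
  ultimately show ?thesis
    using v3_power_mult_not_dvd[of 8 1 "int m"] by (simp add: add_ac numeral_eq_enat)
qed

lemma v3_narayana_minus_one_18_mod_72:
  assumes "i mod 72 = 18"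
  shows "v3 (narayana i - 1) = v3 ((int i + 6) * (int i + 30)) + 2"
proof -
  define m where "m = i div 72"
  have i: "i = 72 * m + 18" using mult_div_mod_eq[of 72 i] assms unfolding m_def by simp
  have "3 ^ (3 + 2) dvd narayana (72 * m + 18) - narayana 18"
    by (rule three_power_dvd_narayana_diff[OF theta_power_72])
      (simp_all add: theta_def numeral_eq_Suc ell_def)
  then have "3 ^ Suc 4 dvd (narayana i - 1) - (narayana 18 - 1)"
    by (simp add: i)
  moreover have "v3 (narayana 18 - 1) = enat 4"
    by (simp add: v3_eq_enat_iff numeral_eq_Suc)
  ultimately have "v3 (narayana i - 1) = enat 4" by (rule v3_eq_if_cong)
  moreover have "v3 ((int i + 6) * (int i + 30)) = enat 2"
  proof -
    have "(int i + 6) * (int i + 30) = 3 ^ 2 * (64 * ((3 * int m + 1) * (3 * int m + 2)))"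
      using i by (simp add: algebra_simps)
    moreover have "v3 ((3 * int m + 1) * (3 * int m + 2)) = 0"
      by (simp add: v3_eq_0_iff prime_dvd_mult_iff) presburger
    ultimately show ?thesis
      using v3_power_mult_not_dvd[of 64 2 "(3 * int m + 1) * (3 * int m + 2)"] by simp
  qed
  ultimately show ?thesis by (simp add: numeral_eq_enat)
qed

lemma v3_narayana_minus_one_42_mod_72:
  assumes "i mod 72 = 42"
  shows "v3 (narayana i - 1) = v3 ((int i + 6) * (int i + 30)) + 2"
proof -
  obtain m where i: "i + 30 = 72 * m"
    by (rule mod_complement_multE[of i 72 30]) (simp_all add: assms)
  then have "theta ^ i = (theta ^ 72) ^ m * theta_inv ^ 30" by (rule theta_power_eq_mult_theta_inv)
  then have "v3 (narayana i - 1) = enat (3 + 2) + v3 (int m)"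
    by (rule v3_narayana_minus_one[OF _ theta_power_72, where d = 2])
      (simp_all add: v3_eq_enat_iff ell_def theta_inv_def numeral_eq_Suc)
  moreover have "int i = 72 * int m - 30" using arg_cong[OF i, of int] by simp
  then have "(int i + 6) * (int i + 30) = 3 ^ 3 * (64 * ((3 * int m - 1) * int m))"
    by (simp only:) (simp add: algebra_simps)
  moreover have "v3 (3 * int m - 1) = 0"
    by (simp add: v3_eq_0_iff) presburger
  ultimately show ?thesis
    using v3_power_mult_not_dvd[of 64 3 "(3 * int m - 1) * int m"] v3_mult[of "3 * int m - 1" "int m"]
    by (simp add: numeral_eq_enat add_ac)
qed

lemma v3_narayana_minus_one_66_mod_72:
  assumes "i mod 72 = 66"
  shows "v3 (narayana i - 1) = v3 ((int i + 6) * (int i + 30)) + 2"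
proof -
  obtain m where i: "i + 6 = 72 * m"
    by (rule mod_complement_multE[of i 72 6]) (simp_all add: assms)
  then have "theta ^ i = (theta ^ 72) ^ m * theta_inv ^ 6" by (rule theta_power_eq_mult_theta_inv)
  then have "v3 (narayana i - 1) = enat (3 + 2) + v3 (int m)"
    by (rule v3_narayana_minus_one[OF _ theta_power_72, where d = 2])
      (simp_all add: v3_eq_enat_iff ell_def theta_inv_def numeral_eq_Suc)
  moreover have "int i = 72 * int m - 6" using arg_cong[OF i, of int] by simp
  then have "(int i + 6) * (int i + 30) = 3 ^ 3 * (64 * (int m * (3 * int m + 1)))"
    by (simp only:) (simp add: algebra_simps)
  moreover have "v3 (3 * int m + 1) = 0"
    by (simp add: v3_eq_0_iff) presburger
  ultimately show ?thesis
    using v3_power_mult_not_dvd[of 64 3 "int m * (3 * int m + 1)"] v3_mult[of "int m" "3 * int m + 1"]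
    by (simp add: numeral_eq_enat add_ac)
qed

lemma v3_narayana_minus_one_18_mod_24:
  assumes "i mod 24 = 18"
  shows "v3 (narayana i - 1) = v3 ((int i + 6) * (int i + 30)) + 2"
proof -
  define k where "k = i div 24"
  have "i = 24 * k + 18" using mult_div_mod_eq[of 24 i] assms unfolding k_def by simp
  then have i: "i = 72 * (k div 3) + (24 * (k mod 3) + 18)"
    using mult_div_mod_eq[of 3 k] by linarith
  have "k mod 3 \<in> {0, 1, 2}" by auto
  then have "i mod 72 \<in> {18, 42, 66}" unfolding i by auto
  then show ?thesis
    using v3_narayana_minus_one_18_mod_72 v3_narayana_minus_one_42_mod_72
      v3_narayana_minus_one_66_mod_72 by auto
qed

theorem theorem3p5:
  fixes i :: nat
  assumes "i \<ge> 1"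
  shows "(i mod 8 \<in> {0, 4, 5, 7} \<longrightarrow> v3 (narayana i - 1) = 0)
       \<and> (i mod 8 = 1 \<longrightarrow> v3 (narayana i - 1) = v3 (int i - 1) + 1)
       \<and> (i mod 8 = 6 \<longrightarrow> v3 (narayana i - 1) = v3 (int i + 2) + 1)
       \<and> (i mod 24 = 2 \<longrightarrow> v3 (narayana i - 1) = v3 (int i - 2) + 2)
       \<and> (i mod 24 = 10 \<longrightarrow> v3 (narayana i - 1) = 2)
       \<and> (i mod 24 = 18 \<longrightarrow> v3 (narayana i - 1) = v3 ((int i + 6) * (int i + 30)) + 2)
       \<and> (i mod 24 = 3 \<longrightarrow> v3 (narayana i - 1) = v3 (int i - 3) + 2)
       \<and> (i mod 24 = 11 \<longrightarrow> v3 (narayana i - 1) = v3 (int i + 13) + 2)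
       \<and> (i mod 24 = 19 \<longrightarrow> v3 (narayana i - 1) = v3 (int i + 5) + 2)"
  by (intro conjI impI)
    (simp_all add: v3_narayana_minus_one_0457_mod_8 v3_narayana_minus_one_1_mod_8
      v3_narayana_minus_one_6_mod_8 v3_narayana_minus_one_2_mod_24
      v3_narayana_minus_one_10_mod_24 v3_narayana_minus_one_18_mod_24
      v3_narayana_minus_one_3_mod_24 v3_narayana_minus_one_11_mod_24
      v3_narayana_minus_one_19_mod_24)

end
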